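(* Let $K_1, K_2, K_3 > 0$ and, for $h > 0$ and $j = 1,2,3$, let $\Omega_j(h) = \sqrt{K_j \tanh(K_j h)}$. There exists a positive and finite value of $h$ such that $\Omega_1(h) + \Omega_2(h) = \Omega_3(h)$ if and only if $$K_1 + K_2 < K_3 < \big(\sqrt{K_1} + \sqrt{K_2}\big)^2.$$ When this pair of inequalities is satisfied, the corresponding value of $h$ is unique.
   Context: Physically, $K_j$ are positive eigenvalue square roots ("wavenumbers") of the negative horizontal Laplacian with Neumann boundary conditions on the cross-section of a cylinder, $h$ is the dimensionless fluid depth, and $\Omega_j(h)$ is the angular frequency given by the finite-depth gravity-wave dispersion relation $\Omega_j^2 = K_j\tanh(K_j h)$. The theorem is a purely real-analytic statement about these functions. *)

theory Defs
  imports Complex_Main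
begin

definition Omega :: "real \<Rightarrow> real \<Rightarrow> real" where
  "Omega K h = sqrt (K * tanh (K * h))"

end

theory Submission
  imports Defs
begin

text \<open>For \<open>0 < K1, K2 < K3\<close> the resonance ratio \<open>(\<Omega>1 + \<Omega>2) / \<Omega>3\<close> is strictly
  increasing in the depth \<open>h\<close>: the square of \<open>\<Omega>j / \<Omega>3\<close> is
  \<open>(Kj / K3) * tanh (Kj h) / tanh (K3 h)\<close>, and \<open>tanh (a h) / tanh (b h)\<close> increases for
  \<open>a < b\<close> because the sign of its derivative is that of
  \<open>sinh (2 b h) / (2 b h) - sinh (2 a h) / (2 a h)\<close>. In shallow water \<open>\<Omega> \<sim> K sqrt h\<close>, in
  deep water \<open>\<Omega> \<rightarrow> sqrt K\<close>, so the ratio increases from \<open>(K1 + K2) / K3\<close> to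
  \<open>(sqrt K1 + sqrt K2) / sqrt K3\<close> and takes the value 1 exactly once iff 1 lies strictly in
  between. A root itself forces \<open>K1, K2 < K3\<close>, since \<open>\<Omega>\<close> is increasing in \<open>K\<close>.\<close>

lemma DERIV_pos_imp_strict_mono_on_greaterThan:
  fixes f f' :: "real \<Rightarrow> real"
  assumes "\<And>x. a < x \<Longrightarrow> (f has_real_derivative f' x) (at x)"
    and "\<And>x. a < x \<Longrightarrow> f' x > 0"
  shows "strict_mono_on {a<..} f"
proof (rule strict_mono_onI)
  fix x y assume x: "x \<in> {a<..}" and "x < y"
  show "f x < f y"
  proof (rule DERIV_pos_imp_increasing[OF \<open>x < y\<close>])
    fix t assume "x \<le> t"
    with x have "a < t" by simp
    with assms show "\<exists>d. (f has_real_derivative d) (at t) \<and> d > 0" by blast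
  qed
qed

lemma strict_mono_on_between_limits:
  fixes f :: "real \<Rightarrow> real"
  assumes mono: "strict_mono_on {a<..} f"
    and lim_a: "(f \<longlongrightarrow> l) (at_right a)" and lim_top: "(f \<longlongrightarrow> u) at_top"
    and x: "a < x"
  shows "l < f x" and "f x < u"
proof -
  define m where "m = (a + x) / 2"
  have m: "a < m" "m < x"
    using x by (auto simp: m_def)
  have "\<forall>\<^sub>F y in at_right a. y < m"
    using order_tendstoD(2)[OF tendsto_ident_at m(1)] .
  with eventually_at_right_less have "\<forall>\<^sub>F y in at_right a. f y \<le> f m"
  proof eventually_elim
    case (elim y)
    then show ?case
      using m by (intro strict_mono_on_leD[OF mono]) auto
  qed
  then have "l \<le> f m"
    by (rule tendsto_upperbound[OF lim_a _ trivial_limit_at_right_real])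
  also have "f m < f x"
    using m by (intro strict_mono_onD[OF mono]) auto
  finally show "l < f x" .
  have "\<forall>\<^sub>F y in at_top. f (x + 1) \<le> f y"
    using eventually_ge_at_top[of "x + 1"]
  proof eventually_elim
    case (elim y)
    then show ?case
      using x by (intro strict_mono_on_leD[OF mono]) auto
  qed
  then have "f (x + 1) \<le> u"
    by (rule tendsto_lowerbound[OF lim_top _ trivial_limit_at_top_linorder])
  moreover have "f x < f (x + 1)"
    using x by (intro strict_mono_onD[OF mono]) auto
  ultimately show "f x < u"
    by simp
qed

lemma exists_eq_between_limits:
  fixes f :: "real \<Rightarrow> real"
  assumes cont: "continuous_on {a<..} f"
    and lim_a: "(f \<longlongrightarrow> l) (at_right a)" and lim_top: "(f \<longlongrightarrow> u) at_top"
    and "l < c" "c < u"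
  shows "\<exists>x>a. f x = c"
proof -
  have "\<forall>\<^sub>F x in at_right a. a < x \<and> f x < c"
    using eventually_at_right_less order_tendstoD(2)[OF lim_a \<open>l < c\<close>] by eventually_elim auto
  then obtain x where x: "a < x" "f x < c"
    using eventually_happens'[OF trivial_limit_at_right_real] by blast
  have "\<forall>\<^sub>F y in at_top. x \<le> y \<and> c < f y"
    using eventually_ge_at_top order_tendstoD(1)[OF lim_top \<open>c < u\<close>] by eventually_elim auto
  then obtain y where y: "x \<le> y" "c < f y"
    using eventually_happens'[OF trivial_limit_at_top_linorder] by blast
  have "continuous_on {x..y} f"
    using x(1) by (intro continuous_on_subset[OF cont]) auto
  then obtain z where "x \<le> z" "z \<le> y" "f z = c"
    using IVT'[of f x c y] x y by auto
  with x(1) show ?thesis by (intro exI[of _ z]) auto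
qed

lemma strict_mono_on_eq_iff_between_limits:
  fixes f :: "real \<Rightarrow> real"
  assumes mono: "strict_mono_on {a<..} f" and cont: "continuous_on {a<..} f"
    and lim_a: "(f \<longlongrightarrow> l) (at_right a)" and lim_top: "(f \<longlongrightarrow> u) at_top"
  shows "(\<exists>x>a. f x = c) \<longleftrightarrow> l < c \<and> c < u"
    and "l < c \<Longrightarrow> c < u \<Longrightarrow> \<exists>!x. a < x \<and> f x = c"
proof -
  show "(\<exists>x>a. f x = c) \<longleftrightarrow> l < c \<and> c < u"
    using strict_mono_on_between_limits[OF mono lim_a lim_top]
      exists_eq_between_limits[OF cont lim_a lim_top] by blast
  show "\<exists>!x. a < x \<and> f x = c" if "l < c" "c < u"
    using exists_eq_between_limits[OF cont lim_a lim_top that] strict_mono_on_eqD[OF mono]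
    by (metis greaterThan_iff)
qed

lemma sinh_less_mult_cosh:
  fixes x :: real
  assumes "0 < x"
  shows "sinh x < x * cosh x"
proof -
  have "(\<lambda>t. t * cosh t - sinh t) 0 < (\<lambda>t. t * cosh t - sinh t) x"
  proof (rule DERIV_pos_imp_increasing_open[OF assms])
    fix t :: real assume "0 < t"
    then show "\<exists>d. ((\<lambda>t. t * cosh t - sinh t) has_real_derivative d) (at t) \<and> d > 0"
      by (intro exI[of _ "t * sinh t"]) (auto intro!: derivative_eq_intros)
  qed (intro continuous_intros)
  then show ?thesis by simp
qed

lemma strict_mono_on_sinh_div:
  "strict_mono_on {0<..} (\<lambda>x::real. sinh x / x)"
proof (rule DERIV_pos_imp_strict_mono_on_greaterThan)
  fix x :: real assume x: "0 < x"
  then show "((\<lambda>x. sinh x / x) has_real_derivative (x * cosh x - sinh x) / x\<^sup>2) (at x)"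
    by (auto intro!: derivative_eq_intros simp: field_simps power2_eq_square)
  show "(x * cosh x - sinh x) / x\<^sup>2 > 0"
    using sinh_less_mult_cosh[OF x] x by simp
qed

lemma has_real_derivative_tanh_ratio:
  fixes a b h :: real
  assumes "b * h \<noteq> 0"
  shows "((\<lambda>h. tanh (a * h) / tanh (b * h)) has_real_derivative
           (a * sinh (b * h) * cosh (b * h) - b * sinh (a * h) * cosh (a * h))
             / (cosh (a * h) * sinh (b * h))\<^sup>2) (at h)"
proof -
  have tanh_ratio: "(\<lambda>h. tanh (a * h) / tanh (b * h))
      = (\<lambda>h. sinh (a * h) * cosh (b * h) / (cosh (a * h) * sinh (b * h)))"
    by (simp add: tanh_def field_simps)
  \<comment> \<open>the left-hand side is the quotient-rule numerator in the shape produced by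
    \<open>derivative_eq_intros\<close>\<close>
  have numerator: "(cosh (a * h) * a * cosh (b * h) + sinh (b * h) * b * sinh (a * h)) * (cosh (a * h) * sinh (b * h))
        - sinh (a * h) * cosh (b * h) * (sinh (a * h) * a * sinh (b * h) + cosh (b * h) * b * cosh (a * h))
      = a * sinh (b * h) * cosh (b * h) - b * sinh (a * h) * cosh (a * h)"
    using cosh_square_eq[of "a * h"] cosh_square_eq[of "b * h"] by algebra
  show ?thesis
    unfolding tanh_ratio using assms numerator
    by (auto intro!: derivative_eq_intros simp: power2_eq_square)
qed

lemma strict_mono_on_tanh_ratio:
  fixes a b :: real
  assumes "0 < a" "a < b"
  shows "strict_mono_on {0<..} (\<lambda>h. tanh (a * h) / tanh (b * h))"
proof (rule DERIV_pos_imp_strict_mono_on_greaterThan)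
  fix h :: real assume h: "0 < h"
  with assms show "((\<lambda>h. tanh (a * h) / tanh (b * h)) has_real_derivative
           (a * sinh (b * h) * cosh (b * h) - b * sinh (a * h) * cosh (a * h))
             / (cosh (a * h) * sinh (b * h))\<^sup>2) (at h)"
    by (intro has_real_derivative_tanh_ratio) auto
  have "sinh (2 * (a * h)) / (2 * (a * h)) < sinh (2 * (b * h)) / (2 * (b * h))"
    using assms h by (intro strict_mono_onD[OF strict_mono_on_sinh_div]) auto
  then have "sinh (a * h) * cosh (a * h) / (a * h) < sinh (b * h) * cosh (b * h) / (b * h)"
    by (simp add: sinh_double)
  then have "b * sinh (a * h) * cosh (a * h) < a * sinh (b * h) * cosh (b * h)"
    using assms h by (simp add: field_simps)
  moreover have "cosh (a * h) * sinh (b * h) \<noteq> 0"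
    using assms h by simp
  ultimately show "(a * sinh (b * h) * cosh (b * h) - b * sinh (a * h) * cosh (a * h))
      / (cosh (a * h) * sinh (b * h))\<^sup>2 > 0"
    by simp
qed

lemma Omega_pos: "0 < K \<Longrightarrow> 0 < h \<Longrightarrow> 0 < Omega K h"
  by (simp add: Omega_def)

lemma strict_mono_on_Omega:
  assumes "0 < h"
  shows "strict_mono_on {0<..} (\<lambda>K. Omega K h)"
proof (rule strict_mono_onI)
  fix a b :: real assume "a \<in> {0<..}" "b \<in> {0<..}" "a < b"
  with assms have "a * tanh (a * h) < b * tanh (b * h)"
    by (intro mult_strict_mono) auto
  then show "Omega a h < Omega b h"
    by (simp add: Omega_def)
qed

lemma Omega_less_iff: "0 < a \<Longrightarrow> 0 < b \<Longrightarrow> 0 < h \<Longrightarrow> Omega a h < Omega b h \<longleftrightarrow> a < b"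
  using strict_mono_on_less[OF strict_mono_on_Omega] by simp

lemma strict_mono_on_Omega_ratio:
  assumes "0 < a" "a < b"
  shows "strict_mono_on {0<..} (\<lambda>h. Omega a h / Omega b h)"
proof (rule strict_mono_onI)
  fix h1 h2 :: real assume h: "h1 \<in> {0<..}" "h2 \<in> {0<..}" "h1 < h2"
  have ratio: "Omega a h / Omega b h = sqrt (a / b * (tanh (a * h) / tanh (b * h)))" for h
    by (simp add: Omega_def real_sqrt_divide[symmetric] real_sqrt_mult[symmetric])
  have "tanh (a * h1) / tanh (b * h1) < tanh (a * h2) / tanh (b * h2)"
    using h by (intro strict_mono_onD[OF strict_mono_on_tanh_ratio[OF assms]])
  with assms show "Omega a h1 / Omega b h1 < Omega a h2 / Omega b h2"
    unfolding ratio by (intro real_sqrt_less_mono mult_strict_left_mono) auto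
qed

lemma tendsto_Omega_div_sqrt_at_right_0:
  assumes "0 \<le> K"
  shows "((\<lambda>h. Omega K h / sqrt h) \<longlongrightarrow> K) (at_right 0)"
proof -
  have "((\<lambda>h. tanh (K * h)) has_real_derivative K) (at 0)"
    by (auto intro!: derivative_eq_intros)
  then have "((\<lambda>h. tanh (K * h) / h) \<longlongrightarrow> K) (at_right 0)"
    by (auto simp: has_field_derivative_iff intro: tendsto_within_subset)
  then have "((\<lambda>h. sqrt (K * (tanh (K * h) / h))) \<longlongrightarrow> sqrt (K * K)) (at_right 0)"
    by (intro tendsto_intros)
  moreover have "\<forall>\<^sub>F h in at_right 0. sqrt (K * (tanh (K * h) / h)) = Omega K h / sqrt h"
    using eventually_at_right_less
    by eventually_elim (simp add: Omega_def real_sqrt_divide[symmetric] real_sqrt_mult[symmetric])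
  ultimately show ?thesis
    using assms by (simp add: tendsto_cong)
qed

lemma tendsto_Omega_at_top:
  assumes "0 < K"
  shows "((\<lambda>h. Omega K h) \<longlongrightarrow> sqrt K) at_top"
proof -
  have "filterlim (\<lambda>h. K * h) at_top at_top"
    using assms by (intro filterlim_tendsto_pos_mult_at_top[OF tendsto_const] filterlim_ident)
  then have "((\<lambda>h. tanh (K * h)) \<longlongrightarrow> 1) at_top"
    by (rule filterlim_compose[OF tanh_real_at_top])
  then have "((\<lambda>h. sqrt (K * tanh (K * h))) \<longlongrightarrow> sqrt (K * 1)) at_top"
    by (intro tendsto_intros)
  then show ?thesis
    by (simp add: Omega_def)
qed

lemma Omega_add_eq_imp_less:
  assumes "0 < K1" "0 < K2" "0 < K3" "0 < h" "Omega K1 h + Omega K2 h = Omega K3 h"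
  shows "K1 < K3" and "K2 < K3"
proof -
  have "Omega K1 h < Omega K3 h" "Omega K2 h < Omega K3 h"
    using assms Omega_pos[of K1 h] Omega_pos[of K2 h] by auto
  then show "K1 < K3" "K2 < K3"
    using assms by (simp_all add: Omega_less_iff)
qed

definition resonance_ratio :: "real \<Rightarrow> real \<Rightarrow> real \<Rightarrow> real \<Rightarrow> real" where
  "resonance_ratio K1 K2 K3 h = (Omega K1 h + Omega K2 h) / Omega K3 h"

lemma resonance_ratio_eq_1_iff:
  "0 < K3 \<Longrightarrow> 0 < h \<Longrightarrow>
    resonance_ratio K1 K2 K3 h = 1 \<longleftrightarrow> Omega K1 h + Omega K2 h = Omega K3 h"
  using Omega_pos[of K3 h] by (auto simp: resonance_ratio_def)

lemma strict_mono_on_resonance_ratio: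
  assumes "0 < K1" "K1 < K3" "0 < K2" "K2 < K3"
  shows "strict_mono_on {0<..} (resonance_ratio K1 K2 K3)"
proof (rule strict_mono_onI)
  fix h1 h2 :: real assume "h1 \<in> {0<..}" "h2 \<in> {0<..}" "h1 < h2"
  then have "Omega K1 h1 / Omega K3 h1 + Omega K2 h1 / Omega K3 h1
      < Omega K1 h2 / Omega K3 h2 + Omega K2 h2 / Omega K3 h2"
    using assms by (intro add_strict_mono strict_mono_onD[OF strict_mono_on_Omega_ratio])
  then show "resonance_ratio K1 K2 K3 h1 < resonance_ratio K1 K2 K3 h2"
    by (simp add: resonance_ratio_def add_divide_distrib)
qed

lemma continuous_on_resonance_ratio:
  "0 \<le> K1 \<Longrightarrow> 0 \<le> K2 \<Longrightarrow> 0 < K3 \<Longrightarrow> continuous_on {0<..} (resonance_ratio K1 K2 K3)"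
  unfolding resonance_ratio_def Omega_def by (intro continuous_intros) auto

lemma tendsto_resonance_ratio_at_right_0:
  assumes "0 \<le> K1" "0 \<le> K2" "0 < K3"
  shows "(resonance_ratio K1 K2 K3 \<longlongrightarrow> (K1 + K2) / K3) (at_right 0)"
proof -
  have "((\<lambda>h. (Omega K1 h / sqrt h + Omega K2 h / sqrt h) / (Omega K3 h / sqrt h))
      \<longlongrightarrow> (K1 + K2) / K3) (at_right 0)"
    using assms by (intro tendsto_intros tendsto_Omega_div_sqrt_at_right_0) auto
  moreover have "\<forall>\<^sub>F h in at_right 0.
      (Omega K1 h / sqrt h + Omega K2 h / sqrt h) / (Omega K3 h / sqrt h) = resonance_ratio K1 K2 K3 h"
    using eventually_at_right_less
    by eventually_elim (simp add: resonance_ratio_def add_divide_distrib[symmetric])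
  ultimately show ?thesis
    by (rule Lim_transform_eventually)
qed

lemma tendsto_resonance_ratio_at_top:
  assumes "0 < K1" "0 < K2" "0 < K3"
  shows "(resonance_ratio K1 K2 K3 \<longlongrightarrow> (sqrt K1 + sqrt K2) / sqrt K3) at_top"
  unfolding resonance_ratio_def using assms
  by (intro tendsto_intros tendsto_Omega_at_top) auto

lemma resonance_bounds_iff:
  fixes K1 K2 K3 :: real
  assumes "0 \<le> K1" "0 \<le> K2" "0 < K3"
  shows "K1 + K2 < K3 \<and> K3 < (sqrt K1 + sqrt K2)\<^sup>2
    \<longleftrightarrow> (K1 + K2) / K3 < 1 \<and> 1 < (sqrt K1 + sqrt K2) / sqrt K3"
proof -
  have "sqrt ((sqrt K1 + sqrt K2)\<^sup>2) = sqrt K1 + sqrt K2"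
    using assms by simp
  then have "K3 < (sqrt K1 + sqrt K2)\<^sup>2 \<longleftrightarrow> sqrt K3 < sqrt K1 + sqrt K2"
    by (metis real_sqrt_less_iff)
  with assms show ?thesis
    by simp
qed

theorem theorem1:
  fixes K1 K2 K3 :: real
  assumes "K1 > 0" and "K2 > 0" and "K3 > 0"
  shows "((\<exists>h>0. Omega K1 h + Omega K2 h = Omega K3 h) \<longleftrightarrow>
            (K1 + K2 < K3 \<and> K3 < (sqrt K1 + sqrt K2)^2))
       \<and> ((K1 + K2 < K3 \<and> K3 < (sqrt K1 + sqrt K2)^2) \<longrightarrow>
            (\<exists>!h. h > 0 \<and> Omega K1 h + Omega K2 h = Omega K3 h))"
proof -
  let ?R = "resonance_ratio K1 K2 K3"
  let ?C = "K1 + K2 < K3 \<and> K3 < (sqrt K1 + sqrt K2)^2"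
  have root_iff: "h > 0 \<and> Omega K1 h + Omega K2 h = Omega K3 h \<longleftrightarrow> h > 0 \<and> ?R h = 1" for h
    using resonance_ratio_eq_1_iff assms by blast
  have bounds: "?C \<longleftrightarrow> (K1 + K2) / K3 < 1 \<and> 1 < (sqrt K1 + sqrt K2) / sqrt K3"
    using assms by (intro resonance_bounds_iff) auto
  have "(\<exists>h>0. ?R h = 1) \<longleftrightarrow> ?C" and "?C \<Longrightarrow> \<exists>!h. 0 < h \<and> ?R h = 1"
    if "K1 < K3" "K2 < K3"
    using strict_mono_on_eq_iff_between_limits[OF
        strict_mono_on_resonance_ratio[OF assms(1) that(1) assms(2) that(2)]
        continuous_on_resonance_ratio tendsto_resonance_ratio_at_right_0 tendsto_resonance_ratio_at_top]
      assms unfolding bounds by auto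
  moreover have "K1 < K3 \<and> K2 < K3"
    if "(\<exists>h>0. Omega K1 h + Omega K2 h = Omega K3 h) \<or> K1 + K2 < K3"
    using that Omega_add_eq_imp_less[OF assms] assms by auto
  ultimately show ?thesis
    unfolding root_iff by blast
qed

end
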